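(* Let $V$ be a simple unitary vertex operator algebra and let $a \in V_d$. Then for all $b \in V$ and all integers $m \geq 0$, $$\|a_m b\|^2 \leq \big(b \,\big|\, (a_{-d}a^* )_0\, b\big).$$ Consequently $\|a_m\|_n^2 \leq \|(a_{-d}a^* )_0\|_n$ for all $m \in \mathbb{Z}_{\geq 0}$ and all $n \in \mathbb{Z}$; in particular $\|a_0\|_n^2 \leq \|(a_{-d}a^* )_0\|_n$ for all $n\in\mathbb{Z}$.
   Context: A simple unitary vertex operator algebra is a vertex operator algebra $V$ (over $\mathbb{C}$) of CFT type, i.e. $V=\bigoplus_{n\geq 0}V_n$ with $V_n=\ker(L_0-n1_V)$ and $V_0=\mathbb{C}\Omega$, with vacuum $\Omega$ and conformal vector $\nu$, $Y(\nu,z)=\sum_{n}L_nz^{-n-2}$, equipped with a scalar product $(\cdot|\cdot)$ with $(\Omega|\Omega)=1$ and an antilinear involution $a\mapsto a^*$ with $\nu^*=\nu$ such that $(b|a_nc)=(a^*_{-n}b|c)$ for all $a,b,c\in V$, $n\in\mathbb{Z}$. For $a\in V$ the modes $a_n\in\mathrm{End}(V)$ are defined by $Y(z^{L_0}a,z)=\sum_{n\in\mathbb{Z}}a_nz^{-n}$; for $a\in V_d$ this means $a_n=a_{(n+d-1)}$ where $Y(a,z)=\sum_n a_{(n)}z^{-n-1}$, and $a_{-d}b=a_{(-1)}b$. Write $\|a\|=\sqrt{(a|a)}$, $V_{\leq n}=\bigoplus_{k\leq n}V_k$, and for $R\in\mathrm{End}(V)$, $\|R\|_n:=\sup\{\|Rb\|: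 b\in V_{\leq n},\ \|b\|\leq 1\}\in[0,+\infty]$. *)

theory Defs
  imports "HOL-Analysis.Analysis"
begin

text \<open>Data of a (unitary) vertex operator algebra on a carrier type 'v.
  nprod V a n b is the n-th product a_(n) b, i.e. Y(a,z) b = sum_n a_(n) b z^(-n-1).
  ip V x y is the scalar product, antilinear in x and linear in y.\<close>

record 'v voa_data =
  smul  :: "complex \<Rightarrow> 'v \<Rightarrow> 'v"
  nprod :: "'v \<Rightarrow> int \<Rightarrow> 'v \<Rightarrow> 'v"
  vac   :: 'v
  conf  :: 'v
  ip    :: "'v \<Rightarrow> 'v \<Rightarrow> complex"
  star  :: "'v \<Rightarrow> 'v"

definition Lmode :: "('v::ab_group_add) voa_data \<Rightarrow> int \<Rightarrow> 'v \<Rightarrow> 'v" where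
  "Lmode V n x = nprod V (conf V) (n + 1) x"

definition Vdeg :: "('v::ab_group_add) voa_data \<Rightarrow> nat \<Rightarrow> 'v set" where
  "Vdeg V k = {x. Lmode V 0 x = smul V (of_nat k) x}"

definition hcomp :: "('v::ab_group_add) voa_data \<Rightarrow> nat \<Rightarrow> 'v \<Rightarrow> 'v" where
  "hcomp V k v = (SOME w. \<exists>f N. (\<forall>j. f j \<in> Vdeg V j) \<and> (\<forall>j>N. f j = 0)
                       \<and> v = sum f {..N} \<and> w = f k)"

definition degbound :: "('v::ab_group_add) voa_data \<Rightarrow> 'v \<Rightarrow> nat" where
  "degbound V v = (LEAST N. \<forall>k>N. hcomp V k v = 0)"

text \<open>Modes a_n defined by Y(z^(L_0) a, z) = sum_n a_n z^(-n), extended linearly: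
  for a in V_d, a_n = a_(n+d-1).\<close>
definition mode :: "('v::ab_group_add) voa_data \<Rightarrow> 'v \<Rightarrow> int \<Rightarrow> 'v \<Rightarrow> 'v" where
  "mode V a n c = (\<Sum>k\<le>degbound V a. nprod V (hcomp V k a) (n + int k - 1) c)"

definition sgn_pow :: "int \<Rightarrow> complex" where
  "sgn_pow r = (if even r then 1 else -1)"

text \<open>Borcherds (Jacobi) identity, with all sums truncated at any M beyond which
  the summands vanish.\<close>
definition borcherds :: "('v::ab_group_add) voa_data \<Rightarrow> bool" where
  "borcherds V \<longleftrightarrow> (\<forall>a b c p q r M.
     (\<forall>i>M. nprod V a (r + int i) b = 0 \<and> nprod V b (q + int i) c = 0
             \<and> nprod V a (p + int i) c = 0) \<longrightarrow>
     (\<Sum>i\<le>M. smul V ((of_int p :: complex) gchoose i)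
                 (nprod V (nprod V a (r + int i) b) (p + q - int i) c))
     = (\<Sum>i\<le>M. smul V ((-1) ^ i * ((of_int r :: complex) gchoose i))
                 (nprod V a (p + r - int i) (nprod V b (q + int i) c)
                  - smul V (sgn_pow r) (nprod V b (q + r - int i) (nprod V a (p + int i) c)))))"

definition vertex_algebra :: "('v::ab_group_add) voa_data \<Rightarrow> bool" where
  "vertex_algebra V \<longleftrightarrow>
     vector_space (smul V) \<and>
     (\<forall>n b. Vector_Spaces.linear (smul V) (smul V) (\<lambda>a. nprod V a n b)) \<and>
     (\<forall>n a. Vector_Spaces.linear (smul V) (smul V) (\<lambda>b. nprod V a n b)) \<and>
     (\<forall>a b. \<exists>N. \<forall>n\<ge>N. nprod V a n b = 0) \<and>
     (\<forall>n b. nprod V (vac V) n b = (if n = -1 then b else 0)) \<and>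
     (\<forall>a. nprod V a (-1) (vac V) = a) \<and>
     (\<forall>a n. n \<ge> 0 \<longrightarrow> nprod V a n (vac V) = 0) \<and>
     borcherds V"

definition voa_cft_type :: "('v::ab_group_add) voa_data \<Rightarrow> bool" where
  "voa_cft_type V \<longleftrightarrow>
     vertex_algebra V \<and>
     (\<exists>c::complex. \<forall>m n x.
        Lmode V m (Lmode V n x) - Lmode V n (Lmode V m x)
        = smul V (of_int (m - n)) (Lmode V (m + n) x)
          + (if m + n = 0 then smul V ((of_int (m^3 - m) / 12) * c) x else 0)) \<and>
     (\<forall>a n b. nprod V (Lmode V (-1) a) n b = smul V (- of_int n) (nprod V a (n - 1) b)) \<and>
     (\<forall>v. \<exists>f N. (\<forall>j. f j \<in> Vdeg V j) \<and> (\<forall>j>N. f j = 0) \<and> v = sum f {..N}) \<and>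
     (\<forall>k. \<exists>B. finite B \<and> Vdeg V k \<subseteq> module.span (smul V) B) \<and>
     conf V \<in> Vdeg V 2 \<and>
     Vdeg V 0 = {smul V c (vac V) | c. True}"

definition voa_ideal :: "('v::ab_group_add) voa_data \<Rightarrow> 'v set \<Rightarrow> bool" where
  "voa_ideal V I \<longleftrightarrow> module.subspace (smul V) I \<and>
     (\<forall>a b n. b \<in> I \<longrightarrow> nprod V a n b \<in> I \<and> nprod V b n a \<in> I)"

definition simple_voa :: "('v::ab_group_add) voa_data \<Rightarrow> bool" where
  "simple_voa V \<longleftrightarrow> (\<forall>I. voa_ideal V I \<longrightarrow> I = {0} \<or> I = UNIV)"

definition unitary_voa :: "('v::ab_group_add) voa_data \<Rightarrow> bool" where
  "unitary_voa V \<longleftrightarrow>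
     voa_cft_type V \<and>
     (\<forall>x y z. ip V x (y + z) = ip V x y + ip V x z) \<and>
     (\<forall>x y c. ip V x (smul V c y) = c * ip V x y) \<and>
     (\<forall>x y. ip V y x = cnj (ip V x y)) \<and>
     (\<forall>x. Im (ip V x x) = 0 \<and> Re (ip V x x) \<ge> 0) \<and>
     (\<forall>x. ip V x x = 0 \<longrightarrow> x = 0) \<and>
     ip V (vac V) (vac V) = 1 \<and>
     (\<forall>x y. star V (x + y) = star V x + star V y) \<and>
     (\<forall>c x. star V (smul V c x) = smul V (cnj c) (star V x)) \<and>
     (\<forall>x. star V (star V x) = x) \<and>
     star V (conf V) = conf V \<and>
     (\<forall>a b c n. ip V b (mode V a n c) = ip V (mode V (star V a) (- n) b) c)"

definition vnorm :: "('v::ab_group_add) voa_data \<Rightarrow> 'v \<Rightarrow> real" where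
  "vnorm V x = sqrt (Re (ip V x x))"

definition Vle :: "('v::ab_group_add) voa_data \<Rightarrow> int \<Rightarrow> 'v set" where
  "Vle V n = {b. \<forall>k. int k > n \<longrightarrow> hcomp V k b = 0}"

definition opnorm :: "('v::ab_group_add) voa_data \<Rightarrow> int \<Rightarrow> ('v \<Rightarrow> 'v) \<Rightarrow> ereal" where
  "opnorm V n R = Sup {ereal (vnorm V (R b)) | b. b \<in> Vle V n \<and> vnorm V b \<le> 1}"

end

theory Submission
  imports Defs
begin

text \<open>For a \<in> V_d the Borcherds identity expands the zero mode of the normal ordered product
  a_(-1) a^* on any vector c into the finite sum
    (a_{-d} a^*)_0 c = \<Sum>_i a_{-d-i} (a^*)_{d+i} c + (a^*)_{d-1-i} a_{i+1-d} c.
  By invariance of the scalar product, a_n and (a^*)_{-n} are adjoint, so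
  (c | (a_{-d} a^*)_0 c) = \<Sum>_i |(a^*)_{d+i} c|^2 + |a_{i+1-d} c|^2, a sum of squares containing
  |a_m c|^2 for every m \<ge> 1 - d.  When d = 0 the remaining mode a_0 is a scalar, so
  |a_0 c| = |(a^*)_0 c|.  The bound for the operator norms on V_{\<le>n} follows by Cauchy-Schwarz.\<close>

lemma Sup_ereal_power2_le:
  fixes F G :: "'b \<Rightarrow> real"
  assumes "\<exists>b. P b" and bound: "\<And>b. P b \<Longrightarrow> 0 \<le> F b \<and> (F b)\<^sup>2 \<le> G b"
  shows "(Sup {ereal (F b) | b. P b})\<^sup>2 \<le> Sup {ereal (G b) | b. P b}"
proof (cases "Sup {ereal (G b) | b. P b} = \<infinity>")
  case False
  obtain b0 where b0: "P b0" using assms(1) by blast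
  have G_le: "ereal (G b) \<le> Sup {ereal (G b) | b. P b}" if "P b" for b
    by (rule Sup_upper) (use that in blast)
  have G0: "0 \<le> G b0" using bound[OF b0] by (meson order.trans zero_le_power2)
  obtain K where K: "Sup {ereal (G b) | b. P b} = ereal K"
    using False G_le[OF b0] by (cases "Sup {ereal (G b) | b. P b}") auto
  have GK: "G b \<le> K" if "P b" for b using G_le[OF that] K by simp
  have "Sup {ereal (F b) | b. P b} \<le> ereal (sqrt K)"
    using bound GK by (intro Sup_least) (auto, meson order.trans real_le_rsqrt)
  moreover have "ereal (F b0) \<le> Sup {ereal (F b) | b. P b}"
    by (rule Sup_upper) (use b0 in blast)
  ultimately obtain r where r: "Sup {ereal (F b) | b. P b} = ereal r" "0 \<le> r" "r \<le> sqrt K"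
    using bound[OF b0] by (cases "Sup {ereal (F b) | b. P b}") auto
  have "r\<^sup>2 \<le> (sqrt K)\<^sup>2" using r(2,3) by (intro power_mono)
  then show ?thesis using GK[OF b0] G0 by (simp add: r(1) K power2_eq_square)
qed simp

lemma gbinomial_one_left: "((1::complex) gchoose i) = (if i \<le> 1 then 1 else 0)"
proof -
  have "((1::complex) gchoose i) = of_nat (1 choose i)"
    using binomial_gbinomial[of 1 i, where 'a=complex] by simp
  then show ?thesis by (cases i) (auto simp: binomial_eq_0)
qed

lemma gbinomial_minus_one_left: "(-1) ^ i * ((-1::complex) gchoose i) = 1"
proof -
  have "((-1::complex) gchoose i) = (-1)^i * of_nat (i choose i)"
    using gbinomial_minus[of "1::complex" i] binomial_gbinomial[of i i, where 'a=complex] by simp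
  then show ?thesis by (simp flip: power_mult_distrib)
qed

lemma sgn_pow_0 [simp]: "sgn_pow 0 = 1"
  and sgn_pow_minus_one [simp]: "sgn_pow (-1) = -1"
  unfolding sgn_pow_def by simp_all

lemma sum_atMost_extend:
  fixes f :: "nat \<Rightarrow> 'a::comm_monoid_add"
  assumes "\<forall>j>N. f j = 0" and "N \<le> K"
  shows "sum f {..K} = sum f {..N}"
  by (rule sum.mono_neutral_right) (use assms in auto)

locale vertex_alg =
  fixes V :: "('v::ab_group_add) voa_data"
  assumes vertex_algebra: "vertex_algebra V"
begin

sublocale vs: vector_space "smul V"
  using vertex_algebra unfolding vertex_algebra_def by blast

lemma nprod_linear_left: "module_hom (smul V) (smul V) (\<lambda>a. nprod V a n b)"
  and nprod_linear_right: "module_hom (smul V) (smul V) (\<lambda>b. nprod V a n b)"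
  using vertex_algebra unfolding vertex_algebra_def module_hom_iff_linear by blast+

lemma nprod_add_left: "nprod V (x + y) n b = nprod V x n b + nprod V y n b"
  and nprod_smul_left: "nprod V (smul V c x) n b = smul V c (nprod V x n b)"
  and nprod_add_right: "nprod V a n (x + y) = nprod V a n x + nprod V a n y"
  and nprod_diff_right: "nprod V a n (x - y) = nprod V a n x - nprod V a n y"
  and nprod_smul_right: "nprod V a n (smul V c x) = smul V c (nprod V a n x)"
  and nprod_sum_right: "nprod V a n (sum f A) = (\<Sum>x\<in>A. nprod V a n (f x))"
  using module_hom.add[OF nprod_linear_left] module_hom.scale[OF nprod_linear_left]
    module_hom.add[OF nprod_linear_right] module_hom.diff[OF nprod_linear_right]
    module_hom.scale[OF nprod_linear_right] module_hom.sum[OF nprod_linear_right]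
  by simp_all

lemma nprod_zero_left [simp]: "nprod V 0 n b = 0"
  and nprod_zero_right [simp]: "nprod V a n 0 = 0"
  using module_hom.zero[OF nprod_linear_left] module_hom.zero[OF nprod_linear_right] by simp_all

lemma nprod_eventually_zero: "\<exists>K::nat. \<forall>n\<ge>int K. nprod V a n b = 0"
proof -
  obtain N where "\<forall>n\<ge>N. nprod V a n b = 0"
    using vertex_algebra unfolding vertex_algebra_def by blast
  then show ?thesis by (intro exI[of _ "nat N"]) auto
qed

lemma nprod_vac_left: "nprod V (vac V) n b = (if n = -1 then b else 0)"
  using vertex_algebra unfolding vertex_algebra_def by blast

lemma borcherds_identity:
  "\<forall>i>M. nprod V a (r + int i) b = 0 \<and> nprod V b (q + int i) c = 0 \<and> nprod V a (p + int i) c = 0 \<Longrightarrow>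
     (\<Sum>i\<le>M. smul V ((of_int p :: complex) gchoose i)
                 (nprod V (nprod V a (r + int i) b) (p + q - int i) c))
     = (\<Sum>i\<le>M. smul V ((-1) ^ i * ((of_int r :: complex) gchoose i))
                 (nprod V a (p + r - int i) (nprod V b (q + int i) c)
                  - smul V (sgn_pow r) (nprod V b (q + r - int i) (nprod V a (p + int i) c))))"
  using vertex_algebra unfolding vertex_algebra_def borcherds_def by blast

lemma nprod_normal_order:
  assumes "\<forall>i>M. nprod V a (-1 + int i) b = 0 \<and> nprod V b (q + int i) c = 0 \<and> nprod V a (0 + int i) c = 0"
  shows "nprod V (nprod V a (-1) b) q c
           = (\<Sum>i\<le>M. nprod V a (-1 - int i) (nprod V b (q + int i) c)
                      + nprod V b (q - 1 - int i) (nprod V a (int i) c))"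
proof -
  let ?t = "\<lambda>i. smul V ((of_int 0 :: complex) gchoose i) (nprod V (nprod V a (-1 + int i) b) (0 + q - int i) c)"
  have "nprod V (nprod V a (-1) b) q c = (\<Sum>i\<in>{0}. ?t i)" by simp
  also have "\<dots> = (\<Sum>i\<le>M. ?t i)"
    by (rule sum.mono_neutral_left) (auto simp: gbinomial_0_left)
  also have "\<dots> = (\<Sum>i\<le>M. nprod V a (-1 - int i) (nprod V b (q + int i) c)
                      + nprod V b (q - 1 - int i) (nprod V a (int i) c))"
    unfolding borcherds_identity[OF assms] by (intro sum.cong refl) (simp add: gbinomial_minus_one_left)
  finally show ?thesis .
qed

end

locale cft_voa =
  fixes V :: "('v::ab_group_add) voa_data"
  assumes cft_type: "voa_cft_type V"

sublocale cft_voa \<subseteq> vertex_alg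
  using cft_type unfolding voa_cft_type_def by unfold_locales blast

context cft_voa
begin

lemma nprod_L_minus_one_left: "nprod V (Lmode V (-1) a) n b = smul V (- of_int n) (nprod V a (n - 1) b)"
  using cft_type unfolding voa_cft_type_def by blast

lemma homogeneous_decomposition:
  "\<exists>f N. (\<forall>j. f j \<in> Vdeg V j) \<and> (\<forall>j>N. f j = 0) \<and> v = sum f {..N}"
  using cft_type unfolding voa_cft_type_def by blast

lemma Vdeg_0_eq: "Vdeg V 0 = {smul V c (vac V) | c. True}"
  using cft_type unfolding voa_cft_type_def by blast

lemma L0_zero [simp]: "Lmode V 0 0 = 0"
  and L0_add: "Lmode V 0 (x + y) = Lmode V 0 x + Lmode V 0 y"
  and L0_smul: "Lmode V 0 (smul V c x) = smul V c (Lmode V 0 x)"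
  and L0_diff: "Lmode V 0 (x - y) = Lmode V 0 x - Lmode V 0 y"
  and L0_sum: "Lmode V 0 (sum f A) = (\<Sum>x\<in>A. Lmode V 0 (f x))"
  unfolding Lmode_def by (simp_all add: nprod_add_right nprod_smul_right nprod_diff_right nprod_sum_right)

lemma Vdeg_zero [simp]: "0 \<in> Vdeg V k"
  and Vdeg_add: "x \<in> Vdeg V k \<Longrightarrow> y \<in> Vdeg V k \<Longrightarrow> x + y \<in> Vdeg V k"
  and Vdeg_smul: "x \<in> Vdeg V k \<Longrightarrow> smul V c x \<in> Vdeg V k"
  and Vdeg_diff: "x \<in> Vdeg V k \<Longrightarrow> y \<in> Vdeg V k \<Longrightarrow> x - y \<in> Vdeg V k"
  unfolding Vdeg_def by (simp_all add: L0_add L0_smul L0_diff mult.commute vs.scale_right_distrib vs.scale_right_diff_distrib)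

text \<open>Applying L_0 - (N + 1) kills the top component and rescales the others by
  nonzero factors, which gives the induction step.\<close>
lemma homogeneous_sum_eq_0:
  assumes "\<forall>j. f j \<in> Vdeg V j" and "(\<Sum>j\<le>N. f j) = 0" and "j \<le> N"
  shows "f j = 0"
  using assms
proof (induction N arbitrary: f j)
  case (Suc N)
  define g where "g j = smul V (of_nat j - of_nat (Suc N)) (f j)" for j
  have g_deg: "\<forall>j. g j \<in> Vdeg V j" using Suc.prems(1) by (simp add: g_def Vdeg_smul)
  have "(\<Sum>j\<le>Suc N. smul V (of_nat j) (f j)) = Lmode V 0 (\<Sum>j\<le>Suc N. f j)"
    unfolding L0_sum using Suc.prems(1) by (intro sum.cong) (auto simp: Vdeg_def)
  then have top_free: "(\<Sum>j\<le>Suc N. smul V (of_nat j) (f j)) = 0"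
    using Suc.prems(2) by simp
  have "(\<Sum>j\<le>N. g j) = (\<Sum>j\<le>Suc N. g j)" by (simp add: g_def)
  also have "\<dots> = (\<Sum>j\<le>Suc N. smul V (of_nat j) (f j)) - smul V (of_nat (Suc N)) (\<Sum>j\<le>Suc N. f j)"
    by (simp only: g_def vs.scale_left_diff_distrib sum_subtractf vs.scale_sum_right)
  also have "\<dots> = 0" using top_free Suc.prems(2) by simp
  finally have "g j = 0" if "j \<le> N" for j using Suc.IH[OF g_deg] that by blast
  then have f_lower: "f j = 0" if "j \<le> N" for j
    using that by (force simp: g_def simp flip: of_nat_Suc)
  then have "f (Suc N) = 0" using Suc.prems(2) by simp
  then show ?case using f_lower Suc.prems(3) le_Suc_eq by blast
qed simp

lemma homogeneous_decomposition_unique: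
  assumes "\<forall>j. f j \<in> Vdeg V j" "\<forall>j>N. f j = 0" "\<forall>j. g j \<in> Vdeg V j" "\<forall>j>M. g j = 0"
    and "sum f {..N} = sum g {..M}"
  shows "f = g"
proof
  fix j
  define K where "K = max N M"
  have "sum f {..K} = sum g {..K}"
    using assms(5) sum_atMost_extend[OF assms(2), of K] sum_atMost_extend[OF assms(4), of K]
    by (simp add: K_def)
  then have "(\<Sum>j\<le>K. f j - g j) = 0" by (simp add: sum_subtractf)
  moreover have "\<forall>j. f j - g j \<in> Vdeg V j" using assms(1,3) Vdeg_diff by blast
  ultimately have "f j - g j = 0" if "j \<le> K" for j
    using homogeneous_sum_eq_0[of "\<lambda>j. f j - g j"] that by blast
  then show "f j = g j" using assms(2,4) by (cases "j \<le> K") (auto simp: K_def)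
qed

lemma hcomp_eq:
  assumes "\<forall>j. f j \<in> Vdeg V j" "\<forall>j>N. f j = 0" "x = sum f {..N}"
  shows "hcomp V k x = f k"
proof -
  have "\<exists>w f' N'. (\<forall>j. f' j \<in> Vdeg V j) \<and> (\<forall>j>N'. f' j = 0) \<and> x = sum f' {..N'} \<and> w = f' k"
    using assms by blast
  from someI_ex[OF this] obtain f' N' where
    "\<forall>j. f' j \<in> Vdeg V j" "\<forall>j>N'. f' j = 0" "x = sum f' {..N'}" "hcomp V k x = f' k"
    unfolding hcomp_def by blast
  moreover from this have "f' = f"
    using homogeneous_decomposition_unique[of f' N' f N] assms by simp
  ultimately show ?thesis by simp
qed

lemma mode_eq_sum_homogeneous:
  assumes "\<forall>j. f j \<in> Vdeg V j" "\<forall>j>N. f j = 0" "x = sum f {..N}"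
  shows "mode V x n c = (\<Sum>j\<le>N. nprod V (f j) (n + int j - 1) c)"
proof -
  note hcomp = hcomp_eq[OF assms]
  have bound: "\<forall>k>N. hcomp V k x = 0" using hcomp assms(2) by simp
  define D where "D = degbound V x"
  have "\<forall>k>D. hcomp V k x = 0" "D \<le> N"
    unfolding D_def degbound_def using bound by (fact LeastI, fact Least_le)
  then have "(\<Sum>k\<le>D. nprod V (f k) (n + int k - 1) c) = (\<Sum>j\<le>N. nprod V (f j) (n + int j - 1) c)"
    by (intro sum_atMost_extend[symmetric]) (auto simp flip: hcomp)
  then show ?thesis unfolding mode_def hcomp D_def[symmetric] .
qed

lemma mode_homogeneous:
  assumes "x \<in> Vdeg V d"
  shows "mode V x n c = nprod V x (n + int d - 1) c"
proof -
  have "mode V x n c = (\<Sum>j\<le>d. nprod V (if j = d then x else 0) (n + int j - 1) c)"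
    by (rule mode_eq_sum_homogeneous) (use assms in auto)
  also have "\<dots> = (\<Sum>j\<le>d. if j = d then nprod V x (n + int j - 1) c else 0)"
    by (intro sum.cong) auto
  finally show ?thesis by simp
qed

lemma mode_smul_right: "mode V x n (smul V c y) = smul V c (mode V x n y)"
  and mode_sum_right: "mode V x n (sum g A) = (\<Sum>y\<in>A. mode V x n (g y))"
  unfolding mode_def by (simp_all add: nprod_smul_right vs.scale_sum_right nprod_sum_right sum.swap[of _ A])

lemma mode_add_left: "mode V (x + y) n c = mode V x n c + mode V y n c"
proof -
  obtain f N g M where f: "\<forall>j. f j \<in> Vdeg V j" "\<forall>j>N. f j = 0" "x = sum f {..N}"
    and g: "\<forall>j. g j \<in> Vdeg V j" "\<forall>j>M. g j = 0" "y = sum g {..M}"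
    using homogeneous_decomposition by meson
  define K where "K = max N M"
  have f': "\<forall>j>K. f j = 0" "x = sum f {..K}" and g': "\<forall>j>K. g j = 0" "y = sum g {..K}"
    using f(2,3) g(2,3) sum_atMost_extend[OF f(2), of K] sum_atMost_extend[OF g(2), of K]
    by (auto simp: K_def)
  have fg: "\<forall>j. f j + g j \<in> Vdeg V j" "\<forall>j>K. f j + g j = 0" "x + y = (\<Sum>j\<le>K. f j + g j)"
    using f(1) g(1) f'(1) g'(1) by (auto simp: Vdeg_add f'(2) g'(2) sum.distrib)
  show ?thesis
    unfolding mode_eq_sum_homogeneous[OF fg] mode_eq_sum_homogeneous[OF f(1) f'] mode_eq_sum_homogeneous[OF g(1) g']
    by (simp add: nprod_add_left sum.distrib)
qed

lemma mode_zero_left [simp]: "mode V 0 n c = 0"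
  using mode_add_left[of 0 0 n c] by simp

lemma mode_sum_left: "mode V (sum g A) n c = (\<Sum>x\<in>A. mode V (g x) n c)"
  by (induction A rule: infinite_finite_induct) (simp_all add: mode_add_left)

lemma mode_Vdeg_0:
  assumes "a \<in> Vdeg V 0"
  obtains c where "\<And>w. mode V a 0 w = smul V c w"
proof -
  obtain c where "a = smul V c (vac V)" using assms Vdeg_0_eq by auto
  then have "mode V a 0 w = smul V c w" for w
    using mode_homogeneous[OF assms] by (simp add: nprod_smul_left nprod_vac_left)
  then show ?thesis using that by blast
qed

text \<open>Borcherds' identity at p = 1, r = 0 for conf V, a, e is the commutator formula
  [L_0, a_(-1)] e = (L_(-1) a)_(0) e + (L_0 a)_(-1) e, and (L_(-1) a)_(0) = 0.\<close>
lemma nprod_minus_one_Vdeg: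
  assumes a: "a \<in> Vdeg V d" and e: "e \<in> Vdeg V k"
  shows "nprod V a (-1) e \<in> Vdeg V (d + k)"
proof -
  obtain K1 K2 K3 where K1: "\<forall>n\<ge>int K1. nprod V (conf V) n a = 0"
    and K2: "\<forall>n\<ge>int K2. nprod V a n e = 0" and K3: "\<forall>n\<ge>int K3. nprod V (conf V) n e = 0"
    using nprod_eventually_zero by meson
  define M where "M = K1 + K2 + K3 + 2"
  have "\<forall>i>M. nprod V (conf V) (0 + int i) a = 0 \<and> nprod V a (-1 + int i) e = 0
             \<and> nprod V (conf V) (1 + int i) e = 0"
    using K1 K2 K3 by (auto simp: M_def)
  note borcherds = borcherds_identity[OF this]
  let ?t = "\<lambda>i. smul V ((of_int 1 :: complex) gchoose i)
                 (nprod V (nprod V (conf V) (0 + int i) a) (1 + -1 - int i) e)"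
  have "(\<Sum>i\<le>M. ?t i) = (\<Sum>i\<le>Suc 0. ?t i)"
    by (rule sum.mono_neutral_right) (auto simp: M_def gbinomial_one_left)
  also have "\<dots> = nprod V (Lmode V (-1) a) 0 e + nprod V (Lmode V 0 a) (-1) e"
    by (simp add: gbinomial_one_left Lmode_def)
  finally have lhs: "(\<Sum>i\<le>M. ?t i) = smul V (of_nat d) (nprod V a (-1) e)"
    using a by (simp add: Vdeg_def nprod_L_minus_one_left nprod_smul_left)
  let ?u = "\<lambda>i. smul V ((-1) ^ i * ((of_int 0 :: complex) gchoose i))
                 (nprod V (conf V) (1 + 0 - int i) (nprod V a (-1 + int i) e)
                  - smul V (sgn_pow 0) (nprod V a (-1 + 0 - int i) (nprod V (conf V) (1 + int i) e)))"
  have "(\<Sum>i\<le>M. ?u i) = (\<Sum>i\<in>{0}. ?u i)"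
    by (rule sum.mono_neutral_right) (auto simp: gbinomial_0_left)
  also have "\<dots> = Lmode V 0 (nprod V a (-1) e) - nprod V a (-1) (Lmode V 0 e)"
    by (simp add: Lmode_def)
  finally have rhs: "(\<Sum>i\<le>M. ?u i) = Lmode V 0 (nprod V a (-1) e) - smul V (of_nat k) (nprod V a (-1) e)"
    using e by (simp add: Vdeg_def nprod_smul_right)
  have "Lmode V 0 (nprod V a (-1) e) = smul V (of_nat d + of_nat k) (nprod V a (-1) e)"
    using borcherds lhs rhs by (simp add: algebra_simps vs.scale_left_distrib)
  then show ?thesis unfolding Vdeg_def by simp
qed

lemma mode_normal_product_homogeneous:
  assumes a: "a \<in> Vdeg V d" and b: "b \<in> Vdeg V k"
    and vanish: "\<forall>i>M. nprod V a (-1 + int i) b = 0 \<and> nprod V b (int k + int d - 1 + int i) c = 0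
                   \<and> nprod V a (int i) c = 0"
  shows "mode V (nprod V a (-1) b) 0 c
           = (\<Sum>i\<le>M. mode V a (- int d - int i) (mode V b (int d + int i) c)
                      + mode V b (int d - 1 - int i) (mode V a (int i + 1 - int d) c))"
proof -
  have "mode V (nprod V a (-1) b) 0 c = nprod V (nprod V a (-1) b) (int k + int d - 1) c"
    using mode_homogeneous[OF nprod_minus_one_Vdeg[OF a b]] by (simp add: add.commute)
  also have "\<dots> = (\<Sum>i\<le>M. nprod V a (-1 - int i) (nprod V b (int k + int d - 1 + int i) c)
                      + nprod V b (int k + int d - 1 - 1 - int i) (nprod V a (int i) c))"
    using vanish by (intro nprod_normal_order) simp
  also have "\<dots> = (\<Sum>i\<le>M. mode V a (- int d - int i) (mode V b (int d + int i) c)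
                      + mode V b (int d - 1 - int i) (mode V a (int i + 1 - int d) c))"
    by (intro sum.cong refl) (simp add: mode_homogeneous[OF a] mode_homogeneous[OF b] algebra_simps minus_diff_commute)
  finally show ?thesis .
qed

lemma mode_normal_product:
  assumes a: "a \<in> Vdeg V d"
  obtains M where "\<forall>i>M. mode V a (int i + 1 - int d) c = 0"
    and "mode V (mode V a (- int d) b) 0 c
           = (\<Sum>i\<le>M. mode V a (- int d - int i) (mode V b (int d + int i) c)
                      + mode V b (int d - 1 - int i) (mode V a (int i + 1 - int d) c))"
proof -
  obtain f N where f: "\<forall>j. f j \<in> Vdeg V j" "\<forall>j>N. f j = 0" "b = sum f {..N}"
    using homogeneous_decomposition by meson
  have "\<forall>k. \<exists>K::nat. \<forall>n\<ge>int K. nprod V a n (f k) = 0"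
    using nprod_eventually_zero by blast
  from choice[OF this] obtain Ka where Ka: "\<forall>k. \<forall>n\<ge>int (Ka k). nprod V a n (f k) = 0"
    by blast
  have "\<forall>k. \<exists>K::nat. \<forall>n\<ge>int K. nprod V (f k) n c = 0"
    using nprod_eventually_zero by blast
  from choice[OF this] obtain Kf where Kf: "\<forall>k. \<forall>n\<ge>int (Kf k). nprod V (f k) n c = 0"
    by blast
  obtain Kc where Kc: "\<forall>n\<ge>int Kc. nprod V a n c = 0"
    using nprod_eventually_zero by blast
  define M where "M = Kc + (\<Sum>k\<le>N. Ka k + Kf k)"
  have vanish: "\<forall>i>M. nprod V a (-1 + int i) (f k) = 0
                  \<and> nprod V (f k) (int k + int d - 1 + int i) c = 0 \<and> nprod V a (int i) c = 0"
    if "k \<le> N" for k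
  proof -
    have "Ka k + Kf k \<le> (\<Sum>k\<le>N. Ka k + Kf k)"
      by (rule member_le_sum) (use that in auto)
    then show ?thesis using Ka Kf Kc by (auto simp: M_def)
  qed
  let ?term = "\<lambda>k i. mode V a (- int d - int i) (mode V (f k) (int d + int i) c)
                      + mode V (f k) (int d - 1 - int i) (mode V a (int i + 1 - int d) c)"
  have "mode V (mode V a (- int d) b) 0 c = (\<Sum>k\<le>N. mode V (nprod V a (-1) (f k)) 0 c)"
    by (simp add: mode_homogeneous[OF a] f(3) nprod_sum_right mode_sum_left)
  also have "\<dots> = (\<Sum>k\<le>N. \<Sum>i\<le>M. ?term k i)"
    using f(1) vanish by (intro sum.cong refl mode_normal_product_homogeneous[OF a]) auto
  also have "\<dots> = (\<Sum>i\<le>M. \<Sum>k\<le>N. ?term k i)"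
    by (rule sum.swap)
  also have "\<dots> = (\<Sum>i\<le>M. mode V a (- int d - int i) (mode V b (int d + int i) c)
                      + mode V b (int d - 1 - int i) (mode V a (int i + 1 - int d) c))"
    by (simp only: f(3) mode_sum_left mode_sum_right sum.distrib)
  finally have "mode V (mode V a (- int d) b) 0 c
           = (\<Sum>i\<le>M. mode V a (- int d - int i) (mode V b (int d + int i) c)
                      + mode V b (int d - 1 - int i) (mode V a (int i + 1 - int d) c))" .
  moreover have "\<forall>i>M. mode V a (int i + 1 - int d) c = 0"
    using Kc by (simp add: mode_homogeneous[OF a] M_def)
  ultimately show ?thesis using that by blast
qed

lemma zero_in_Vle: "0 \<in> Vle V n"
  using hcomp_eq[of "\<lambda>j. 0" 0 0] unfolding Vle_def by simp

end

locale unitary_vertex_algebra =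
  fixes V :: "('v::ab_group_add) voa_data"
  assumes unitary: "unitary_voa V"

sublocale unitary_vertex_algebra \<subseteq> cft_voa
  using unitary by unfold_locales (simp add: unitary_voa_def)

context unitary_vertex_algebra
begin

lemma ip_add_right: "ip V x (y + z) = ip V x y + ip V x z"
  and ip_smul_right: "ip V x (smul V c y) = c * ip V x y"
  and ip_commute: "ip V y x = cnj (ip V x y)"
  and ip_self_real_nonneg: "Im (ip V x x) = 0 \<and> Re (ip V x x) \<ge> 0"
  and ip_self_eq_0: "ip V x x = 0 \<Longrightarrow> x = 0"
  and star_star [simp]: "star V (star V x) = x"
  and ip_mode_adjoint: "ip V b (mode V a n e) = ip V (mode V (star V a) (- n) b) e"
  using unitary unfolding unitary_voa_def by meson+

lemma ip_zero_right [simp]: "ip V x 0 = 0"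
  and ip_zero_left [simp]: "ip V 0 x = 0"
  using ip_add_right[of x 0 0] ip_commute[of 0 x] by simp_all

lemma ip_add_left: "ip V (y + z) x = ip V y x + ip V z x"
  and ip_smul_left: "ip V (smul V c y) x = cnj c * ip V y x"
  using ip_commute[of "y + z" x] ip_commute[of "smul V c y" x] ip_commute[of x y] ip_commute[of x z]
    ip_add_right[of x y z] ip_smul_right[of x c y]
  by simp_all

lemma ip_diff_right: "ip V x (y - z) = ip V x y - ip V x z"
  and ip_diff_left: "ip V (y - z) x = ip V y x - ip V z x"
  using ip_add_right[of x "y - z" z] ip_add_left[of "y - z" z x] by simp_all

lemma ip_sum_right: "ip V x (sum f A) = (\<Sum>a\<in>A. ip V x (f a))"
  by (induction A rule: infinite_finite_induct) (simp_all add: ip_add_right)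

lemma ip_self_eq_vnorm_power2: "ip V x x = complex_of_real ((vnorm V x)\<^sup>2)"
  using ip_self_real_nonneg[of x] by (simp add: vnorm_def complex_eq_iff)

lemma vnorm_power2: "(vnorm V x)\<^sup>2 = Re (ip V x x)"
  by (simp add: ip_self_eq_vnorm_power2)

lemma vnorm_nonneg: "0 \<le> vnorm V x"
  using ip_self_real_nonneg[of x] unfolding vnorm_def by simp

lemma vnorm_eq_0: "vnorm V x = 0 \<Longrightarrow> x = 0"
  using ip_self_eq_vnorm_power2[of x] ip_self_eq_0 by simp

lemma Re_ip_le_vnorm_mult: "Re (ip V u w) \<le> vnorm V u * vnorm V w"
proof -
  define s t where "s = vnorm V w" and "t = vnorm V u"
  have uu: "Re (ip V u u) = t\<^sup>2" and ww: "Re (ip V w w) = s\<^sup>2"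
    by (simp_all add: vnorm_power2 s_def t_def)
  have wu: "Re (ip V w u) = Re (ip V u w)" using ip_commute[of w u] by simp
  define v where "v = smul V (of_real s) u - smul V (of_real t) w"
  have "ip V v v = of_real (s * s) * ip V u u - of_real (s * t) * ip V u w
      - of_real (t * s) * ip V w u + of_real (t * t) * ip V w w"
    unfolding v_def by (simp add: ip_diff_left ip_diff_right ip_smul_left ip_smul_right algebra_simps)
  then have "Re (ip V v v) = s * s * Re (ip V u u) - s * t * Re (ip V u w)
      - t * s * Re (ip V w u) + t * t * Re (ip V w w)"
    by simp
  also have "\<dots> = 2 * (s * t) * (s * t - Re (ip V u w))"
    using uu ww wu by (simp add: power2_eq_square algebra_simps)
  finally have "Re (ip V v v) = 2 * (s * t) * (s * t - Re (ip V u w))" .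
  then have nonneg: "0 \<le> (s * t) * (s * t - Re (ip V u w))"
    using ip_self_real_nonneg[of v] by simp
  show ?thesis
  proof (cases "s * t > 0")
    case True
    then show ?thesis using nonneg by (simp add: s_def t_def mult.commute zero_le_mult_iff)
  next
    case False
    then have "s = 0 \<or> t = 0" using vnorm_nonneg s_def t_def by (metis less_eq_real_def mult_pos_pos)
    then have "w = 0 \<or> u = 0" using vnorm_eq_0[of w] vnorm_eq_0[of u] s_def t_def by auto
    then show ?thesis using vnorm_nonneg by auto
  qed
qed

text \<open>Here a is a multiple of the vacuum, so a_0 is a scalar and commutes with its adjoint.\<close>
lemma vnorm_mode_Vdeg_0:
  assumes "a \<in> Vdeg V 0"
  shows "vnorm V (mode V a 0 c) = vnorm V (mode V (star V a) 0 c)"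
proof -
  obtain k where scalar: "\<And>w. mode V a 0 w = smul V k w"
    using mode_Vdeg_0[OF assms] by blast
  have "ip V (mode V a 0 c) (mode V a 0 c) = ip V (mode V (star V a) 0 (mode V a 0 c)) c"
    using ip_mode_adjoint[of "mode V a 0 c" a 0 c] by simp
  also have "\<dots> = ip V (mode V a 0 (mode V (star V a) 0 c)) c"
    by (simp add: scalar mode_smul_right)
  also have "\<dots> = ip V (mode V (star V a) 0 c) (mode V (star V a) 0 c)"
    using ip_mode_adjoint[of "mode V (star V a) 0 c" "star V a" 0 c] by simp
  finally show ?thesis unfolding vnorm_def by simp
qed

lemma ip_normal_product_self:
  assumes a: "a \<in> Vdeg V d"
  obtains M where "\<forall>i>M. mode V a (int i + 1 - int d) c = 0"
    and "ip V c (mode V (mode V a (- int d) (star V a)) 0 c)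
           = of_real (\<Sum>i\<le>M. (vnorm V (mode V (star V a) (int d + int i) c))\<^sup>2
                              + (vnorm V (mode V a (int i + 1 - int d) c))\<^sup>2)"
proof -
  obtain M where vanish: "\<forall>i>M. mode V a (int i + 1 - int d) c = 0"
    and expansion: "mode V (mode V a (- int d) (star V a)) 0 c
           = (\<Sum>i\<le>M. mode V a (- int d - int i) (mode V (star V a) (int d + int i) c)
                      + mode V (star V a) (int d - 1 - int i) (mode V a (int i + 1 - int d) c))"
    using mode_normal_product[OF a] by blast
  have "ip V c (mode V a (- int d - int i) y) = ip V (mode V (star V a) (int d + int i) c) y" for i y
    using ip_mode_adjoint[of c a "- int d - int i" y] by (simp add: add.commute)
  moreover have "ip V c (mode V (star V a) (int d - 1 - int i) z) = ip V (mode V a (int i + 1 - int d) c) z"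
    for i z using ip_mode_adjoint[of c "star V a" "int d - 1 - int i" z] by (simp add: algebra_simps)
  ultimately have "ip V c (mode V (mode V a (- int d) (star V a)) 0 c)
      = (\<Sum>i\<le>M. of_real ((vnorm V (mode V (star V a) (int d + int i) c))\<^sup>2
                          + (vnorm V (mode V a (int i + 1 - int d) c))\<^sup>2))"
    unfolding expansion ip_sum_right ip_add_right by (simp add: ip_self_eq_vnorm_power2)
  then show ?thesis using that vanish by simp
qed

lemma vnorm_mode_power2_le:
  assumes a: "a \<in> Vdeg V d" and m: "0 \<le> m"
  shows "Im (ip V c (mode V (mode V a (- int d) (star V a)) 0 c)) = 0
    \<and> (vnorm V (mode V a m c))\<^sup>2 \<le> Re (ip V c (mode V (mode V a (- int d) (star V a)) 0 c))"
proof -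
  define Q where "Q i = (vnorm V (mode V (star V a) (int d + int i) c))\<^sup>2
                         + (vnorm V (mode V a (int i + 1 - int d) c))\<^sup>2" for i :: nat
  obtain M where vanish: "\<forall>i>M. mode V a (int i + 1 - int d) c = 0"
    and expansion: "ip V c (mode V (mode V a (- int d) (star V a)) 0 c) = of_real (\<Sum>i\<le>M. Q i)"
    using ip_normal_product_self[OF a] unfolding Q_def by blast
  have Q_le_sum: "Q i \<le> (\<Sum>i\<le>M. Q i)" if "i \<le> M" for i
    by (rule member_le_sum) (use that in \<open>auto simp: Q_def\<close>)
  have "(vnorm V (mode V a m c))\<^sup>2 \<le> (\<Sum>i\<le>M. Q i)"
  proof (cases "d = 0 \<and> m = 0")
    case True \<comment> \<open>the one mode a_m, m \<ge> 0, not of the form a_{i+1-d}\<close>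
    then have "(vnorm V (mode V a m c))\<^sup>2 = (vnorm V (mode V (star V a) (int d + int 0) c))\<^sup>2"
      using vnorm_mode_Vdeg_0 a by simp
    also have "\<dots> \<le> Q 0" by (simp add: Q_def)
    finally show ?thesis using Q_le_sum[of 0] by simp
  next
    case False
    then have "0 \<le> m + int d - 1" using m by auto
    then obtain i where m_eq: "m = int i + 1 - int d"
      by (metis add.commute diff_add_cancel diff_diff_eq2 nonneg_int_cases)
    show ?thesis
    proof (cases "i \<le> M")
      case True
      have "(vnorm V (mode V a m c))\<^sup>2 \<le> Q i" by (simp add: Q_def m_eq)
      then show ?thesis using Q_le_sum[OF True] by simp
    next
      case False
      then have "mode V a m c = 0" using vanish m_eq by simp
      then show ?thesis by (simp add: vnorm_def sum_nonneg Q_def)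
    qed
  qed
  then show ?thesis by (simp add: expansion)
qed

lemma opnorm_power2_le:
  assumes "\<And>b. (vnorm V (R b))\<^sup>2 \<le> Re (ip V b (T b))"
  shows "(opnorm V n R)\<^sup>2 \<le> opnorm V n T"
  unfolding opnorm_def
proof (rule Sup_ereal_power2_le)
  show "\<exists>b. b \<in> Vle V n \<and> vnorm V b \<le> 1"
    using zero_in_Vle by (intro exI[of _ 0]) (simp add: vnorm_def)
next
  fix b assume b: "b \<in> Vle V n \<and> vnorm V b \<le> 1"
  have "(vnorm V (R b))\<^sup>2 \<le> Re (ip V b (T b))" by (fact assms)
  also have "\<dots> \<le> vnorm V b * vnorm V (T b)" by (rule Re_ip_le_vnorm_mult)
  also have "\<dots> \<le> vnorm V (T b)" using b vnorm_nonneg by (simp add: mult_left_le_one_le)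
  finally show "0 \<le> vnorm V (R b) \<and> (vnorm V (R b))\<^sup>2 \<le> vnorm V (T b)"
    using vnorm_nonneg by simp
qed

end

theorem mainTheorem1:
  fixes V :: "('v::ab_group_add) voa_data" and a :: 'v and d :: nat
  assumes "unitary_voa V" and "simple_voa V" and "a \<in> Vdeg V d"
  shows "(\<forall>b (m::int). m \<ge> 0 \<longrightarrow>
            Im (ip V b (mode V (mode V a (- int d) (star V a)) 0 b)) = 0 \<and>
            (vnorm V (mode V a m b))^2 \<le> Re (ip V b (mode V (mode V a (- int d) (star V a)) 0 b)))
       \<and> (\<forall>(m::int) (n::int). m \<ge> 0 \<longrightarrow>
            (opnorm V n (mode V a m))^2 \<le> opnorm V n (mode V (mode V a (- int d) (star V a)) 0))
       \<and> (\<forall>n::int. (opnorm V n (mode V a 0))^2 \<le> opnorm V n (mode V (mode V a (- int d) (star V a)) 0))"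
proof -
  interpret unitary_vertex_algebra V
    by (fact unitary_vertex_algebra.intro[OF assms(1)])
  have pointwise: "\<forall>b (m::int). m \<ge> 0 \<longrightarrow>
            Im (ip V b (mode V (mode V a (- int d) (star V a)) 0 b)) = 0 \<and>
            (vnorm V (mode V a m b))^2 \<le> Re (ip V b (mode V (mode V a (- int d) (star V a)) 0 b))"
    using vnorm_mode_power2_le[OF assms(3)] by blast
  then have "\<forall>(m::int) (n::int). m \<ge> 0 \<longrightarrow>
            (opnorm V n (mode V a m))^2 \<le> opnorm V n (mode V (mode V a (- int d) (star V a)) 0)"
    by (auto intro: opnorm_power2_le)
  with pointwise show ?thesis by simp
qed

end
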